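(* Let $0<\varepsilon<1$. Let $\mathcal C'$ be any clustering of $V$ that does not split any atom of $\mathcal K$ and such that for every $u\in V$ and every $C\in\mathcal C'$ with $K_u\subsetneq C$ we have $w(u,C)>\frac{|C|}{2}+\varepsilon w_u$. Then for every $C\in\mathcal C'$ and every $u,v\in C$, $w_u>\varepsilon w_v$.
   Context: A Correlation Clustering instance consists of a finite vertex set $V$ and a partition $E^+\uplus E^-=\binom V2$ of unordered pairs of distinct vertices into $+$edges and $-$edges. $\mathcal K$ is a partition of $V$ into atoms, and every pair of distinct vertices in a common atom is a $+$edge. For $u\in V$, $K_u$ is the atom containing $u$ and $k_u=|K_u|$. For $u,v\in V$ (possibly equal), $w_{uv}=\frac1{k_uk_v}\sum_{u'\in K_u,v'\in K_v}\mathbf 1[u'v'\text{ is a }+\text{edge or }u'=v']\in[0,1]$; for $V'\subseteq V$, $w(u,V')=\sum_{v\in V'}w_{uv}$, and $w_u=w(u,V)$. *)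

theory Defs
  imports Complex_Main "HOL-Library.Disjoint_Sets"
begin

text \<open>Correlation clustering instance: vertex set V, the +edges are given by a
symmetric relation Pl on V (pairs not in Pl are -edges). Atoms form a partition
\<K> of V.\<close>

definition atom :: "'a set set \<Rightarrow> 'a \<Rightarrow> 'a set" where
  "atom \<K> u = (THE K. K \<in> \<K> \<and> u \<in> K)"

definition wt :: "('a \<Rightarrow> 'a \<Rightarrow> bool) \<Rightarrow> 'a set set \<Rightarrow> 'a \<Rightarrow> 'a \<Rightarrow> real" where
  "wt Pl \<K> u v =
     (\<Sum>u'\<in>atom \<K> u. \<Sum>v'\<in>atom \<K> v. if Pl u' v' \<or> u' = v' then 1 else 0)
       / (real (card (atom \<K> u)) * real (card (atom \<K> v)))"

definition wset :: "('a \<Rightarrow> 'a \<Rightarrow> bool) \<Rightarrow> 'a set set \<Rightarrow> 'a \<Rightarrow> 'a set \<Rightarrow> real" where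
  "wset Pl \<K> u S = (\<Sum>v\<in>S. wt Pl \<K> u v)"

end

theory Submission
  imports Defs
begin

text \<open>Weights depend on vertices only through their atoms, so if \<open>u\<close> and \<open>v\<close> share an
atom then \<open>w\<^sub>u = w\<^sub>v \<ge> w\<^sub>v\<^sub>v = 1\<close> and \<open>w\<^sub>u > \<epsilon> w\<^sub>v\<close>. Otherwise both atoms are proper subsets
of the cluster \<open>C\<close>, and the hypothesis applies to both vertices: for \<open>v\<close>, together with
\<open>w(v,C) \<le> |C|\<close>, it gives \<open>\<epsilon> w\<^sub>v < |C|/2\<close>; for \<open>u\<close> it gives \<open>w\<^sub>u \<ge> w(u,C) > |C|/2\<close>.\<close>

lemma partition_on_part_unique:
  assumes "partition_on V P" "A \<in> P" "B \<in> P" "x \<in> A" "x \<in> B"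
  shows "A = B"
  using assms by (meson disjointD disjoint_iff partition_onD2)

lemma partition_on_subset:
  assumes "partition_on V P" "A \<in> P"
  shows "A \<subseteq> V"
  using assms by (auto simp: partition_on_def)

lemma atom_in_partition_and_mem:
  assumes P: "partition_on V \<K>" and u: "u \<in> V"
  shows "atom \<K> u \<in> \<K>" and "u \<in> atom \<K> u"
proof -
  obtain A where A: "A \<in> \<K>" "u \<in> A"
    using u partition_onD1[OF P] by auto
  have "atom \<K> u = A"
    unfolding atom_def
    by (rule the_equality) (use A partition_on_part_unique[OF P _ A(1) _ A(2)] in blast)+
  then show "atom \<K> u \<in> \<K>" and "u \<in> atom \<K> u" using A by simp_all
qed

lemma atom_eq_if_mem_atom:
  assumes P: "partition_on V \<K>" and u: "u \<in> V" and v: "v \<in> atom \<K> u"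
  shows "atom \<K> v = atom \<K> u"
proof -
  note au = atom_in_partition_and_mem[OF P u]
  have "v \<in> V" using partition_on_subset[OF P au(1)] v by blast
  note av = atom_in_partition_and_mem[OF P this]
  show ?thesis using partition_on_part_unique[OF P av(1) au(1) av(2) v] .
qed

lemma card_atom_pos:
  assumes "finite V" "partition_on V \<K>" "u \<in> V"
  shows "card (atom \<K> u) > 0"
proof -
  note au = atom_in_partition_and_mem[OF assms(2,3)]
  have "finite (atom \<K> u)"
    using partition_on_subset[OF assms(2) au(1)] assms(1) by (rule finite_subset)
  with au(2) show ?thesis by (auto simp: card_gt_0_iff)
qed

lemma wt_nonneg: "wt Pl \<K> u v \<ge> 0"
  unfolding wt_def by (intro divide_nonneg_nonneg sum_nonneg) auto

lemma wt_le_1: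
  assumes finV: "finite V" and P: "partition_on V \<K>" and u: "u \<in> V" and v: "v \<in> V"
  shows "wt Pl \<K> u v \<le> 1"
proof -
  have "(\<Sum>u'\<in>atom \<K> u. \<Sum>v'\<in>atom \<K> v. if Pl u' v' \<or> u' = v' then 1 else 0)
       \<le> (\<Sum>u'\<in>atom \<K> u. \<Sum>v'\<in>atom \<K> v. (1::real))"
    by (intro sum_mono) auto
  also have "\<dots> = real (card (atom \<K> u)) * real (card (atom \<K> v))" by simp
  finally show ?thesis
    unfolding wt_def using card_atom_pos[OF finV P u] card_atom_pos[OF finV P v]
    by (simp add: divide_le_eq_1)
qed

lemma wt_self:
  assumes finV: "finite V" and P: "partition_on V \<K>" and u: "u \<in> V"
    and clique: "\<And>K x y. K \<in> \<K> \<Longrightarrow> x \<in> K \<Longrightarrow> y \<in> K \<Longrightarrow> x \<noteq> y \<Longrightarrow> Pl x y"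
  shows "wt Pl \<K> u u = 1"
proof -
  have "(\<Sum>u'\<in>atom \<K> u. \<Sum>v'\<in>atom \<K> u. if Pl u' v' \<or> u' = v' then 1 else 0)
       = (\<Sum>u'\<in>atom \<K> u. \<Sum>v'\<in>atom \<K> u. (1::real))"
    using clique[OF atom_in_partition_and_mem(1)[OF P u]] by (intro sum.cong refl) auto
  also have "\<dots> = real (card (atom \<K> u)) * real (card (atom \<K> u))" by simp
  finally show ?thesis unfolding wt_def using card_atom_pos[OF finV P u] by simp
qed

lemma wset_cong_atom:
  assumes "atom \<K> u = atom \<K> v"
  shows "wset Pl \<K> u S = wset Pl \<K> v S"
  unfolding wset_def wt_def assms ..

lemma wset_mono:
  assumes "finite T" "S \<subseteq> T"
  shows "wset Pl \<K> u S \<le> wset Pl \<K> u T"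
  unfolding wset_def using assms by (intro sum_mono2) (auto intro: wt_nonneg)

lemma wset_le_card:
  assumes "finite V" "partition_on V \<K>" "u \<in> V" "S \<subseteq> V"
  shows "wset Pl \<K> u S \<le> real (card S)"
proof -
  have "wset Pl \<K> u S \<le> (\<Sum>x\<in>S. 1)"
    unfolding wset_def using assms(4) by (intro sum_mono wt_le_1[OF assms(1-3)]) auto
  then show ?thesis by simp
qed

lemma wset_ge_1:
  assumes finV: "finite V" and P: "partition_on V \<K>" and u: "u \<in> V"
    and clique: "\<And>K x y. K \<in> \<K> \<Longrightarrow> x \<in> K \<Longrightarrow> y \<in> K \<Longrightarrow> x \<noteq> y \<Longrightarrow> Pl x y"
  shows "wset Pl \<K> u V \<ge> 1"
proof -
  have "wset Pl \<K> u {u} = 1" unfolding wset_def using wt_self[OF assms] by simp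
  moreover have "wset Pl \<K> u {u} \<le> wset Pl \<K> u V" using u by (intro wset_mono[OF finV]) simp
  ultimately show ?thesis by simp
qed

lemma atom_psubset_cluster:
  assumes K_part: "partition_on V \<K>" and C_part: "partition_on V \<C>"
    and nosplit: "\<And>K. K \<in> \<K> \<Longrightarrow> \<exists>C\<in>\<C>. K \<subseteq> C"
    and C: "C \<in> \<C>" and uC: "u \<in> C" and vC: "v \<in> C" and uv: "atom \<K> u \<noteq> atom \<K> v"
  shows "atom \<K> u \<subset> C"
proof -
  have u: "u \<in> V" and v: "v \<in> V" using partition_on_subset[OF C_part C] uC vC by auto
  note au = atom_in_partition_and_mem[OF K_part u]
  obtain C' where C': "C' \<in> \<C>" "atom \<K> u \<subseteq> C'" using nosplit[OF au(1)] by blast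
  have "C' = C" using partition_on_part_unique[OF C_part C'(1) C] C'(2) au(2) uC by blast
  moreover have "v \<notin> atom \<K> u"
  proof
    assume "v \<in> atom \<K> u"
    with uv show False using atom_eq_if_mem_atom[OF K_part u] by simp
  qed
  ultimately show ?thesis using C' vC by blast
qed

theorem lemma10:
  fixes V :: "'a set" and Pl :: "'a \<Rightarrow> 'a \<Rightarrow> bool"
    and \<K> \<C> :: "'a set set" and \<epsilon> :: real
  assumes finV: "finite V"
    and Pl_in: "\<And>x y. Pl x y \<Longrightarrow> x \<in> V \<and> y \<in> V \<and> x \<noteq> y"
    and Pl_sym: "\<And>x y. Pl x y \<Longrightarrow> Pl y x"
    and K_part: "partition_on V \<K>"
    and K_clique: "\<And>K x y. K \<in> \<K> \<Longrightarrow> x \<in> K \<Longrightarrow> y \<in> K \<Longrightarrow> x \<noteq> y \<Longrightarrow> Pl x y"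
    and eps: "0 < \<epsilon>" "\<epsilon> < 1"
    and C_part: "partition_on V \<C>"
    and C_nosplit: "\<And>K. K \<in> \<K> \<Longrightarrow> \<exists>C\<in>\<C>. K \<subseteq> C"
    and C_cond: "\<And>u C. u \<in> V \<Longrightarrow> C \<in> \<C> \<Longrightarrow> atom \<K> u \<subset> C \<Longrightarrow>
        wset Pl \<K> u C > real (card C) / 2 + \<epsilon> * wset Pl \<K> u V"
  shows "\<forall>C\<in>\<C>. \<forall>u\<in>C. \<forall>v\<in>C. wset Pl \<K> u V > \<epsilon> * wset Pl \<K> v V"
proof (intro ballI)
  fix C u v assume C: "C \<in> \<C>" and uC: "u \<in> C" and vC: "v \<in> C"
  have CV: "C \<subseteq> V" using partition_on_subset[OF C_part C] .
  with uC vC have u: "u \<in> V" and v: "v \<in> V" by auto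
  have wu: "wset Pl \<K> u V \<ge> 1" and wv: "wset Pl \<K> v V \<ge> 1"
    using wset_ge_1[OF finV K_part _ K_clique] u v by auto
  show "wset Pl \<K> u V > \<epsilon> * wset Pl \<K> v V"
  proof (cases "atom \<K> u = atom \<K> v")
    case True
    then show ?thesis using wset_cong_atom[OF True] wv eps by simp
  next
    case False
    have "atom \<K> u \<subset> C" "atom \<K> v \<subset> C"
      using atom_psubset_cluster[OF K_part C_part C_nosplit C uC vC False]
        atom_psubset_cluster[OF K_part C_part C_nosplit C vC uC] False by auto
    then have "wset Pl \<K> u C > real (card C) / 2 + \<epsilon> * wset Pl \<K> u V"
      and "wset Pl \<K> v C > real (card C) / 2 + \<epsilon> * wset Pl \<K> v V"
      using C_cond[OF u C] C_cond[OF v C] by auto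
    moreover have "wset Pl \<K> v C \<le> real (card C)" using wset_le_card[OF finV K_part v CV] .
    moreover have "wset Pl \<K> u C \<le> wset Pl \<K> u V" using wset_mono[OF finV CV] .
    moreover have "\<epsilon> * wset Pl \<K> u V \<ge> 0" using eps wu by simp
    ultimately show ?thesis by linarith
  qed
qed

end
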